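(* Fix $\epsilon\in(0,1/4)$ and $\mathscr A=(a,b,c,d)\in\mathbb{R}^4$ with $|c|\le\epsilon$, $|d|\le\epsilon$. Then: (1) $\sigma_{\mathscr A}$ commutes with $\tau_{\mathscr A}\sigma_{\mathscr A}^{-1}\tau_{\mathscr A}^{-1}$; (2) $\sigma'_{\mathscr A}$ commutes with $\tau'^{-1}_{\mathscr A}\sigma'^{-1}_{\mathscr A}\tau'_{\mathscr A}$; (3) $\sigma_{\mathscr A}$ commutes with $\tau'_{\mathscr A}$, and $\sigma'_{\mathscr A}$ commutes with $\tau_{\mathscr A}$.
   Context: Let $p\colon\mathbb{R}^2\to\mathbb{R}^2/\mathbb{Z}^2$ be the projection, $D_\epsilon=[0,1]^2\setminus[2\epsilon,1-2\epsilon]^2$, $P_\epsilon=p(D_\epsilon)$ (a once-punctured torus) with $\omega_0=dx\wedge dy$. Hamiltonian vector fields: $\omega_0(X_H,\cdot)=-dH$; $\varphi^t_H$ is the time-$t$ flow of an autonomous $H$. $Y_c$, $Y'_d$ are compactly supported vector fields on $P_\epsilon$ with $\mathcal L_{Y_c}\omega_0=\mathcal L_{Y'_d}\omega_0=0$, $Y_c=c\,\partial_x$ at $p(x,y)$ for $(x,y)\in([-\epsilon,\epsilon]\times\mathbb{R})\cup(\mathbb{R}\times[-\epsilon,\epsilon])$, and $Y'_d=-d\,\partial_y$ on the same set. $\tau_{\mathscr A}$, $\tau'_{\mathscr A}$ are the time-one maps of $Y_c$, $Y'_d$. For $0<r\le|q|\le\epsilon$: $I_{q,r}=(\frac{q-r}2,\frac{q+r}2)$,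 $J_{q,r}=[-\frac{|q|-r}2,\frac{|q|-r}2]$; $\rho_{q,r}\colon[-\epsilon,\epsilon]\to[-1,1]$ is smooth with $\mathrm{supp}\,\rho_{q,r}\subset(-\frac{|q|+r}2,\frac{|q|+r}2)$, $\rho_{q,r}(x)+\rho_{q,r}(x+q)=q/|q|$ for $x\in I_{-q,r}$, and $\rho_{q,r}=q/|q|$ on $J_{q,r}$. $H_{q,r}$ (resp. $H'_{q,r}$) is the function on $P_\epsilon$ induced by $(x,y)\mapsto-\rho_{q,r}(x)$ for $|x|\le\epsilon$, $0$ for $\epsilon<|x|\le1/2$ (resp. the same with $y$ in place of $x$). Let $\Delta=\min\{|c|,|d|\}$ if $c\ne0\ne d$, else $\Delta=\max\{|c|,|d|\}$. Define $\sigma^t_{\mathscr A}=\varphi^{bt}_{H_{c,\Delta}}$ on $p(I_{-c,\Delta}\times\mathbb{R})$ and the identity elsewhere; $\sigma'^t_{\mathscr A}=\varphi^{at}_{H'_{d,\Delta}}$ on $p(\mathbb{R}\times I_{-d,\Delta})$ and the identity elsewhere; $\sigma_{\mathscr A}=\sigma^1_{\mathscr A}$, $\sigma'_{\mathscr A}=\sigma'^1_{\mathscr A}$. Convention: if $c=0$ the pair $(c,\Delta)$ in the definition of $\sigma_{\mathscr A}$ is replaced by $(\epsilon,\epsilon)$ (so the region is $p(I_{-\epsilon,\epsilon}\times\mathbb R)$ and the function is $H_{\epsilon,\epsilon}$), and similarly if $d=0$ for $\sigma'_{\mathscr A}$. These are compactly supported symplectomorphisms of $(P_\epsilon,\omega_0)$.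 *)

theory Defs
  imports "HOL-Analysis.Analysis"
begin

(* Points of the torus R^2/Z^2 are represented by their lifts in R^2 = real \<times> real;
   maps/vector fields on the torus are represented by their (Z^2-equivariant / periodic) lifts. *)

definition in_Z2 :: "real \<times> real \<Rightarrow> bool" where
  "in_Z2 v \<longleftrightarrow> fst v \<in> \<int> \<and> snd v \<in> \<int>"

definition torus_eq :: "real \<times> real \<Rightarrow> real \<times> real \<Rightarrow> bool" where
  "torus_eq u v \<longleftrightarrow> in_Z2 (u - v)"

definition commutes_T :: "(real \<times> real \<Rightarrow> real \<times> real) \<Rightarrow> (real \<times> real \<Rightarrow> real \<times> real) \<Rightarrow> bool" where
  "commutes_T f g \<longleftrightarrow> (\<forall>v. torus_eq (f (g v)) (g (f v)))"

definition periodic2 :: "(real \<times> real \<Rightarrow> 'b) \<Rightarrow> bool" where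
  "periodic2 F \<longleftrightarrow> (\<forall>v k. in_Z2 k \<longrightarrow> F (v + k) = F v)"

fun Ck :: "nat \<Rightarrow> ('a::real_normed_vector \<Rightarrow> 'b::real_normed_vector) \<Rightarrow> bool" where
  "Ck 0 f = continuous_on UNIV f"
| "Ck (Suc n) f = (\<exists>f'. (\<forall>x. (f has_derivative f' x) (at x)) \<and> (\<forall>u. Ck n (\<lambda>x. f' x u)))"

definition smooth :: "('a::real_normed_vector \<Rightarrow> 'b::real_normed_vector) \<Rightarrow> bool" where
  "smooth f \<longleftrightarrow> (\<forall>n. Ck n f)"

(* preimage p^{-1}(P_eps) of the punctured torus P_eps = p([0,1]^2 - [2eps,1-2eps]^2) *)
definition P_lift :: "real \<Rightarrow> (real \<times> real) set" where
  "P_lift \<epsilon> = {v. \<not> (\<exists>k. in_Z2 k \<and> v - k \<in> {2*\<epsilon>..1-2*\<epsilon>} \<times> {2*\<epsilon>..1-2*\<epsilon>})}"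

definition cross :: "real \<Rightarrow> (real \<times> real) set" where
  "cross \<epsilon> = {v. (\<exists>m::int. \<bar>fst v - of_int m\<bar> \<le> \<epsilon>) \<or> (\<exists>m::int. \<bar>snd v - of_int m\<bar> \<le> \<epsilon>)}"

(* L_Y \<omega>0 = d(\<iota>_Y \<omega>0) = (\<partial>Y1/\<partial>x + \<partial>Y2/\<partial>y) dx\<and>dy *)
definition lie_omega0_zero :: "(real \<times> real \<Rightarrow> real \<times> real) \<Rightarrow> bool" where
  "lie_omega0_zero Y \<longleftrightarrow>
     (\<forall>v. fst (frechet_derivative Y (at v) (1,0)) + snd (frechet_derivative Y (at v) (0,1)) = 0)"

definition sympl_field :: "real \<Rightarrow> (real \<times> real \<Rightarrow> real \<times> real) \<Rightarrow> bool" where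
  "sympl_field \<epsilon> Y \<longleftrightarrow> smooth Y \<and> periodic2 Y \<and> lie_omega0_zero Y
      \<and> closure {v. Y v \<noteq> 0} \<subseteq> P_lift \<epsilon>"

definition is_flow :: "(real \<times> real \<Rightarrow> real \<times> real) \<Rightarrow> (real \<Rightarrow> real \<times> real \<Rightarrow> real \<times> real) \<Rightarrow> bool" where
  "is_flow X \<phi> \<longleftrightarrow> (\<forall>v. \<phi> 0 v = v \<and>
      (\<forall>t. ((\<lambda>s. \<phi> s v) has_vector_derivative X (\<phi> t v)) (at t)))"

(* Hamiltonian vector field: \<omega>0(X_H, -) = - dH, \<omega>0 = dx\<and>dy *)
definition ham_vf :: "(real \<times> real \<Rightarrow> real) \<Rightarrow> real \<times> real \<Rightarrow> real \<times> real" where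
  "ham_vf H v = (- frechet_derivative H (at v) (0,1), frechet_derivative H (at v) (1,0))"

definition Iqr :: "real \<Rightarrow> real \<Rightarrow> real set" where
  "Iqr q r = {(q - r)/2 <..< (q + r)/2}"

definition Jqr :: "real \<Rightarrow> real \<Rightarrow> real set" where
  "Jqr q r = {-(\<bar>q\<bar> - r)/2 .. (\<bar>q\<bar> - r)/2}"

(* \<rho>_{q,r}: smooth, values in [-1,1], support in (-(|q|+r)/2,(|q|+r)/2) (hence inside (-eps,eps);
   \<rho> is given as a real function, i.e. extended by 0 outside [-eps,eps]) *)
definition rho_ok :: "real \<Rightarrow> real \<Rightarrow> real \<Rightarrow> (real \<Rightarrow> real) \<Rightarrow> bool" where
  "rho_ok \<epsilon> q r \<rho> \<longleftrightarrow> smooth \<rho> \<and> (\<forall>x. \<bar>\<rho> x\<bar> \<le> 1)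
     \<and> closure {x. \<rho> x \<noteq> 0} \<subseteq> {-(\<bar>q\<bar> + r)/2 <..< (\<bar>q\<bar> + r)/2}
     \<and> (\<forall>x\<in>Iqr (-q) r. \<rho> x + \<rho> (x + q) = q / \<bar>q\<bar>)
     \<and> (\<forall>x\<in>Jqr q r. \<rho> x = q / \<bar>q\<bar>)"

(* H_{q,r} lifted to R^2 (x-version) and H'_{q,r} (y-version), representative in [-1/2,1/2] *)
definition Hx :: "real \<Rightarrow> (real \<Rightarrow> real) \<Rightarrow> real \<times> real \<Rightarrow> real" where
  "Hx \<epsilon> \<rho> v = (let x = fst v - of_int (round (fst v)) in if \<bar>x\<bar> \<le> \<epsilon> then - \<rho> x else 0)"

definition Hy :: "real \<Rightarrow> (real \<Rightarrow> real) \<Rightarrow> real \<times> real \<Rightarrow> real" where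
  "Hy \<epsilon> \<rho> v = (let y = snd v - of_int (round (snd v)) in if \<bar>y\<bar> \<le> \<epsilon> then - \<rho> y else 0)"

definition Delta :: "real \<Rightarrow> real \<Rightarrow> real" where
  "Delta c d = (if c \<noteq> 0 \<and> d \<noteq> 0 then min \<bar>c\<bar> \<bar>d\<bar> else max \<bar>c\<bar> \<bar>d\<bar>)"

definition qr :: "real \<Rightarrow> real \<Rightarrow> real \<Rightarrow> real \<times> real" where
  "qr \<epsilon> c d = (if c = 0 then (\<epsilon>, \<epsilon>) else (c, Delta c d))"

definition xstrip :: "real \<Rightarrow> real \<Rightarrow> (real \<times> real) set" where
  "xstrip q r = {v. \<exists>m::int. fst v - of_int m \<in> Iqr (-q) r}"

definition ystrip :: "real \<Rightarrow> real \<Rightarrow> (real \<times> real) set" where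
  "ystrip q r = {v. \<exists>m::int. snd v - of_int m \<in> Iqr (-q) r}"

(* \<sigma> = flow of X_H at time s on the strip, identity elsewhere *)
definition restr_map :: "(real \<times> real) set \<Rightarrow> (real \<times> real \<Rightarrow> real \<times> real) \<Rightarrow> real \<times> real \<Rightarrow> real \<times> real" where
  "restr_map S f v = (if v \<in> S then f v else v)"

end

theory Submission
  imports Defs
begin

(*
  On the strip S = p(I \<times> R) carrying \<sigma>, the Hamiltonian H depends on x alone, so \<sigma> is the
  vertical shear (x, y) \<mapsto> (x, y + b g(x)) on S and the identity elsewhere.  Points of S stay in the
  band |x| < \<epsilon> where Y = c \<partial>x during the flow, so \<tau> translates S by (c, 0); by the choice of
  the width \<Delta> this translate is S itself with \<tau> = id on S (c = 0) or is disjoint from S.  In the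
  first case \<tau> \<sigma>\<inverse> \<tau>\<inverse> = \<sigma>\<inverse>, in the second it is supported in \<tau>(S), away from the support
  of \<sigma>; either way it commutes with \<sigma>.  Similarly \<tau>' acts on S as the vertical translation by
  (0, -d), which commutes with a vertical shear depending on x only.  The statements for \<sigma>' are
  the same with the coordinates exchanged.  The inverses make sense because time-one maps of
  Lipschitz fields are bijective (uniqueness of ODE solutions via Gronwall).
*)

section \<open>Flows of vector fields\<close>

lemma scalar_gronwall_zero:
  fixes h :: "real \<Rightarrow> real"
  assumes deriv: "\<And>s. (h has_real_derivative h' s) (at s)"
    and bound: "\<And>s. \<bar>h' s\<bar> \<le> M * h s"
    and nonneg: "\<And>s. 0 \<le> h s" and zero: "h t0 = 0"
  shows "h t = 0"
proof -
  have weighted_deriv: "((\<lambda>s. exp (k * s) * h s) has_real_derivative exp (k * s) * (h' s + k * h s)) (at s)"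
    for k s
    by (rule derivative_eq_intros deriv refl | simp add: algebra_simps)+
  show ?thesis
  proof (cases "t0 \<le> t")
    case True
    have "exp (- M * t) * h t \<le> exp (- M * t0) * h t0"
    proof (rule DERIV_nonpos_imp_nonincreasing[OF True])
      fix s
      have "exp (- M * s) * (h' s + - M * h s) \<le> 0"
        using bound[of s] by (intro mult_nonneg_nonpos) auto
      then show "\<exists>y. DERIV (\<lambda>s. exp (- M * s) * h s) s :> y \<and> y \<le> 0"
        using weighted_deriv by blast
    qed
    then show ?thesis using zero nonneg[of t] by (simp add: mult_le_0_iff)
  next
    case False
    have "exp (M * t) * h t \<le> exp (M * t0) * h t0"
    proof (rule DERIV_nonneg_imp_nondecreasing[of t t0 "\<lambda>s. exp (M * s) * h s"])
      show "t \<le> t0" using False by simp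
    next
      fix s
      have "0 \<le> exp (M * s) * (h' s + M * h s)"
        using bound[of s] by simp
      then show "\<exists>y. DERIV (\<lambda>s. exp (M * s) * h s) s :> y \<and> 0 \<le> y"
        using weighted_deriv by blast
    qed
    then show ?thesis using zero nonneg[of t] by (simp add: mult_le_0_iff)
  qed
qed

lemma lipschitz_ode_unique:
  fixes Y :: "'a::real_inner \<Rightarrow> 'a"
  assumes lip: "L-lipschitz_on UNIV Y"
    and x: "\<And>t. (x has_vector_derivative Y (x t)) (at t)"
    and y: "\<And>t. (y has_vector_derivative Y (y t)) (at t)"
    and start: "x t0 = y t0"
  shows "x t = y t"
proof -
  define D where "D s = x s - y s" for s
  define V where "V s = Y (x s) - Y (y s)" for s
  have dD: "(D has_derivative (\<lambda>r. r *\<^sub>R V s)) (at s)" for s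
    using has_vector_derivative_diff[OF x y] unfolding D_def V_def has_vector_derivative_def .
  have dh: "((\<lambda>s. D s \<bullet> D s) has_real_derivative 2 * (D s \<bullet> V s)) (at s)" for s
    using has_derivative_inner[OF dD dD] unfolding has_field_derivative_def
    by (rule has_derivative_eq_rhs) (auto simp: fun_eq_iff inner_commute[of "V s"])
  have "\<bar>2 * (D s \<bullet> V s)\<bar> \<le> 2 * L * (D s \<bullet> D s)" for s
  proof -
    have "\<bar>D s \<bullet> V s\<bar> \<le> norm (D s) * norm (V s)"
      by (rule Cauchy_Schwarz_ineq2)
    also have "\<dots> \<le> norm (D s) * (L * norm (D s))"
      using lipschitz_onD[OF lip, of "x s" "y s"]
      by (intro mult_left_mono) (simp_all add: dist_norm D_def V_def)
    also have "\<dots> = L * (D s \<bullet> D s)"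
      by (simp only: dot_square_norm power2_eq_square mult_ac)
    finally show ?thesis by (simp add: abs_mult)
  qed
  then have "D t \<bullet> D t = 0"
    by (rule scalar_gronwall_zero[OF dh, of "2 * L" t0]) (simp_all add: D_def start)
  then show ?thesis by (simp add: D_def)
qed

lemma vector_derivative_zero_imp_constant:
  fixes f :: "real \<Rightarrow> 'a::real_normed_vector"
  assumes "convex S" "\<And>t. t \<in> S \<Longrightarrow> (f has_vector_derivative 0) (at t)" "s \<in> S" "t \<in> S"
  shows "f s = f t"
proof -
  obtain c where "\<And>t. t \<in> S \<Longrightarrow> f t = c"
    using has_vector_derivative_zero_constant[of S f] assms(1,2) has_vector_derivative_at_within
    by blast
  then show ?thesis using assms(3,4) by simp
qed

(* The times at which the trajectory agrees with the straight line form a clopen subset of [0, 1]. *)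
lemma trajectory_in_constant_region:
  fixes x :: "real \<Rightarrow> 'a::real_normed_vector"
  assumes deriv: "\<And>t. (x has_vector_derivative Y (x t)) (at t)"
    and U: "open U" and const: "\<And>w. w \<in> U \<Longrightarrow> Y w = C"
    and segment: "\<And>t. t \<in> {0..1} \<Longrightarrow> x 0 + t *\<^sub>R C \<in> U"
  shows "x 1 = x 0 + C"
proof -
  define f where "f t = x t - t *\<^sub>R C" for t
  define A where "A = {t \<in> {0..1}. f t = x 0}"
  have cont: "continuous_on UNIV x"
    using deriv by (metis continuous_at_imp_continuous_on has_vector_derivative_continuous)
  have "closedin (top_of_set {0..1}) A"
    unfolding A_def f_def
    by (intro continuous_closedin_preimage_constant continuous_intros continuous_on_subset[OF cont]) auto
  moreover have "openin (top_of_set {0..1}) A"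
    unfolding openin_euclidean_subtopology_iff
  proof (intro conjI ballI)
    fix t assume "t \<in> A"
    then have "x t \<in> U" using segment by (auto simp: A_def f_def diff_eq_eq add.commute)
    moreover have "open {s. x s \<in> U}"
      using open_vimage[OF U cont] by (simp add: vimage_def)
    ultimately obtain e where "e > 0" and e: "ball t e \<subseteq> {s. x s \<in> U}"
      unfolding open_contains_ball by blast
    have "(f has_vector_derivative 0) (at s)" if "s \<in> ball t e" for s
    proof -
      have "(f has_vector_derivative Y (x s) - 1 *\<^sub>R C) (at s)"
        unfolding f_def by (auto intro!: derivative_eq_intros deriv)
      then show ?thesis using e that const by auto
    qed
    then have f_const: "f s = f t" if "s \<in> ball t e" for s
      using vector_derivative_zero_imp_constant[of "ball t e" f s t] that \<open>e > 0\<close> by auto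
    show "\<exists>e>0. \<forall>s\<in>{0..1}. dist s t < e \<longrightarrow> s \<in> A"
    proof (intro exI[of _ e] conjI ballI impI)
      fix s assume "s \<in> {0..1}" "dist s t < e"
      then show "s \<in> A"
        using \<open>t \<in> A\<close> f_const[of s] by (simp add: A_def dist_commute)
    qed (fact \<open>e > 0\<close>)
  qed (auto simp: A_def)
  moreover have "0 \<in> A" by (simp add: A_def f_def)
  ultimately have "A = {0..1}"
    using connected_clopen[THEN iffD1, OF connected_Icc] by blast
  then have "1 \<in> A" by simp
  then have "f 1 = x 0" by (simp add: A_def)
  then show ?thesis by (simp add: f_def diff_eq_eq add.commute)
qed

lemma trajectory_of_fibrewise_constant_field:
  fixes \<pi> :: "'a::real_normed_vector \<Rightarrow> 'b::real_normed_vector"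
  assumes \<pi>: "bounded_linear \<pi>" and X: "\<And>w. X w = G (\<pi> w)" and G: "\<And>y. \<pi> (G y) = 0"
    and deriv: "\<And>t. (x has_vector_derivative X (x t)) (at t)"
  shows "x t = x 0 + t *\<^sub>R G (\<pi> (x 0))"
proof -
  have "((\<lambda>s. \<pi> (x s)) has_vector_derivative \<pi> (X (x s))) (at s)" for s
    by (rule bounded_linear.has_vector_derivative[OF \<pi> deriv])
  then have "((\<lambda>s. \<pi> (x s)) has_vector_derivative 0) (at s)" for s
    by (simp only: X G)
  then have fibre: "\<pi> (x s) = \<pi> (x 0)" for s
    using vector_derivative_zero_imp_constant[of UNIV "\<lambda>s. \<pi> (x s)" s 0] by simp
  have "((\<lambda>s. x s - s *\<^sub>R G (\<pi> (x 0))) has_vector_derivative 0) (at s)" for s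
  proof -
    have "((\<lambda>s. x s - s *\<^sub>R G (\<pi> (x 0))) has_vector_derivative X (x s) - G (\<pi> (x 0))) (at s)"
      by (auto intro!: derivative_eq_intros deriv)
    then show ?thesis by (simp only: X fibre[of s] diff_self)
  qed
  then have "x t - t *\<^sub>R G (\<pi> (x 0)) = x 0 - 0 *\<^sub>R G (\<pi> (x 0))"
    using vector_derivative_zero_imp_constant[of UNIV "\<lambda>s. x s - s *\<^sub>R G (\<pi> (x 0))" t 0] by simp
  then show ?thesis by (simp add: diff_eq_eq add.commute)
qed

lemma is_flowD:
  assumes "is_flow Y \<phi>"
  shows is_flow_start: "\<phi> 0 v = v"
    and is_flow_deriv: "((\<lambda>s. \<phi> s v) has_vector_derivative Y (\<phi> t v)) (at t)"
  using assms unfolding is_flow_def by blast+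

lemma flow_add:
  assumes lip: "L-lipschitz_on UNIV Y" and flow: "is_flow Y \<phi>"
  shows "\<phi> (s + t) v = \<phi> s (\<phi> t v)"
proof (rule lipschitz_ode_unique[OF lip, of "\<lambda>s. \<phi> (s + t) v" "\<lambda>s. \<phi> s (\<phi> t v)" 0 s])
  show "((\<lambda>s. \<phi> (s + t) v) has_vector_derivative Y (\<phi> (s + t) v)) (at s)" for s
    using vector_diff_chain_at[OF has_vector_derivative_add_const[THEN iffD2, OF has_vector_derivative_id]
        is_flow_deriv[OF flow, of v "s + t"]] by (simp add: o_def)
  show "((\<lambda>s. \<phi> s (\<phi> t v)) has_vector_derivative Y (\<phi> s (\<phi> t v))) (at s)" for s
    by (rule is_flow_deriv[OF flow])
  show "\<phi> (0 + t) v = \<phi> 0 (\<phi> t v)"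
    by (simp add: is_flow_start[OF flow])
qed

lemma bij_flow:
  assumes "L-lipschitz_on UNIV Y" "is_flow Y \<phi>"
  shows "bij (\<phi> t)"
proof (rule bij_betw_byWitness[of UNIV "\<phi> (-t)"])
  have inverse: "\<phi> s (\<phi> (-s) v) = v" for s v
    using flow_add[OF assms, of s "-s" v] is_flow_start[OF assms(2)] by simp
  show "\<forall>v\<in>UNIV. \<phi> (-t) (\<phi> t v) = v"
    using inverse[of "-t"] by simp
  show "\<forall>v\<in>UNIV. \<phi> t (\<phi> (-t) v) = v"
    using inverse[of t] by simp
qed auto

section \<open>Periodic C1 fields are Lipschitz\<close>

lemma periodic2D: "periodic2 F \<Longrightarrow> in_Z2 k \<Longrightarrow> F (v + k) = F v"
  unfolding periodic2_def by blast

lemma periodic2_bounded_range: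
  assumes periodic: "periodic2 f" and cont: "continuous_on UNIV f"
  shows "bounded (range f)"
proof (rule bounded_subset)
  show "bounded (f ` ({0..1} \<times> {0..1}))"
    by (intro compact_imp_bounded compact_continuous_image continuous_on_subset[OF cont]
        compact_Times compact_Icc) auto
  show "range f \<subseteq> f ` ({0..1} \<times> {0..1})"
  proof clarify
    fix x :: real and y :: real
    define k :: "real \<times> real" where "k = (of_int \<lfloor>x\<rfloor>, of_int \<lfloor>y\<rfloor>)"
    have "in_Z2 k" by (simp add: k_def in_Z2_def)
    then have "f (x, y) = f ((x, y) - k)"
      using periodic2D[OF periodic, of k "(x, y) - k"] by simp
    moreover have "0 \<le> z - of_int \<lfloor>z\<rfloor> \<and> z - of_int \<lfloor>z\<rfloor> \<le> 1" for z :: real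
      using floor_correct[of z] unfolding of_int_add of_int_1 by linarith
    then have "(x, y) - k \<in> {0..1} \<times> {0..1}"
      by (simp add: k_def)
    ultimately show "f (x, y) \<in> f ` ({0..1} \<times> {0..1})" by (rule image_eqI)
  qed
qed

lemma periodic2_derivative:
  assumes periodic: "periodic2 f" and deriv: "\<And>x. (f has_derivative f' x) (at x)"
  shows "periodic2 f'"
  unfolding periodic2_def
proof (intro allI impI)
  fix x k assume "in_Z2 k"
  then have "(\<lambda>z. f (z + k)) = f"
    using periodic2D[OF periodic] by auto
  moreover have "((\<lambda>z. f (z + k)) has_derivative f' (x + k)) (at x)"
    using has_derivative_compose[OF has_derivative_add_const[OF has_derivative_ident] deriv]
    by (simp add: o_def)
  ultimately have "(f has_derivative f' (x + k)) (at x)" by simp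
  then show "f' (x + k) = f' x"
    using has_derivative_unique[OF deriv[of x]] by simp
qed

lemma C1_periodic2_lipschitz:
  fixes Y :: "real \<times> real \<Rightarrow> 'b::real_normed_vector"
  assumes C1: "Ck 1 Y" and periodic: "periodic2 Y"
  obtains L where "L-lipschitz_on UNIV Y"
proof -
  obtain Y' where deriv: "\<And>x. (Y has_derivative Y' x) (at x)"
    and cont: "\<And>u. continuous_on UNIV (\<lambda>x. Y' x u)"
    using C1 unfolding One_nat_def Ck.simps by blast
  have "periodic2 (\<lambda>x. Y' x u)" for u
    using periodic2_derivative[OF periodic deriv] by (simp add: periodic2_def)
  then have "\<exists>B. \<forall>x. norm (Y' x u) \<le> B" for u
    using periodic2_bounded_range[OF _ cont] unfolding bounded_iff by blast
  then obtain B where B: "\<And>u x. norm (Y' x u) \<le> B u"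
    using choice[of "\<lambda>u B. \<forall>x. norm (Y' x u) \<le> B"] by blast
  have "onorm (Y' x) \<le> (\<Sum>i\<in>Basis. B i)" for x
    using order_trans[OF onorm_componentwise[OF has_derivative_bounded_linear[OF deriv]] sum_mono] B
    by blast
  moreover have "0 \<le> (\<Sum>i\<in>Basis. B i)"
    using order_trans[OF norm_ge_zero B] by (simp add: sum_nonneg)
  ultimately have "(\<Sum>i\<in>Basis. B i)-lipschitz_on UNIV Y"
    using deriv by (intro bounded_derivative_imp_lipschitz) (auto intro: has_derivative_at_withinI)
  then show thesis by (rule that)
qed

section \<open>The Hamiltonian flows are shears\<close>

lemma rho_ok_vanishes:
  assumes "rho_ok \<epsilon> q r \<rho>" "(\<bar>q\<bar> + r) / 2 \<le> \<epsilon>" "\<epsilon> \<le> \<bar>z\<bar>"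
  shows "\<rho> z = 0"
proof (rule ccontr)
  assume "\<rho> z \<noteq> 0"
  then have "z \<in> closure {x. \<rho> x \<noteq> 0}" by (simp add: closure_subset[THEN subsetD])
  then have "z \<in> {-(\<bar>q\<bar> + r) / 2 <..< (\<bar>q\<bar> + r) / 2}"
    using assms(1) unfolding rho_ok_def by blast
  then have "\<bar>z\<bar> < (\<bar>q\<bar> + r) / 2" by (simp; linarith)
  then show False using assms(2,3) by linarith
qed

lemma rho_ok_has_derivative:
  assumes "rho_ok \<epsilon> q r \<rho>"
  shows "(\<rho> has_real_derivative deriv \<rho> x) (at x)"
proof -
  have "Ck 1 \<rho>" using assms unfolding rho_ok_def smooth_def by blast
  then have "\<rho> differentiable at x"
    unfolding One_nat_def Ck.simps differentiable_def by blast
  then show ?thesis by (simp add: DERIV_deriv_iff_real_differentiable)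
qed

lemma periodization_local_eq:
  fixes \<rho> :: "real \<Rightarrow> real"
  assumes vanish: "\<And>z. \<epsilon> \<le> \<bar>z\<bar> \<Longrightarrow> \<rho> z = 0" and close: "\<bar>y - x\<bar> < 1/2 - \<epsilon>"
  shows "\<rho> (y - of_int (round y)) = \<rho> (y - of_int (round x))"
proof (cases "round y = round x")
  case False
  then have "1 \<le> \<bar>round y - round x\<bar>" by arith
  then have far: "1 \<le> \<bar>of_int (round y) - of_int (round x) :: real\<bar>"
    by (metis of_int_1_le_iff of_int_abs of_int_diff)
  have "\<bar>y - of_int (round y)\<bar> \<le> 1/2" "\<bar>x - of_int (round x)\<bar> \<le> 1/2"
    using of_int_round_abs_le[of y] of_int_round_abs_le[of x] by (simp_all add: abs_minus_commute)
  then have "\<epsilon> \<le> \<bar>y - of_int (round y)\<bar>" "\<epsilon> \<le> \<bar>y - of_int (round x)\<bar>"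
    using far close by linarith+
  then show ?thesis using vanish by simp
qed simp

lemma periodization_has_derivative:
  fixes \<rho> :: "real \<Rightarrow> real"
  assumes deriv: "\<And>x. (\<rho> has_real_derivative \<rho>' x) (at x)"
    and vanish: "\<And>z. \<epsilon> \<le> \<bar>z\<bar> \<Longrightarrow> \<rho> z = 0" and "\<epsilon> < 1/2"
  shows "((\<lambda>y. \<rho> (y - of_int (round y))) has_real_derivative \<rho>' (x - of_int (round x))) (at x)"
proof -
  have "((\<lambda>y. y - of_int (round x)) has_real_derivative 1) (at x)"
    by (auto intro!: derivative_eq_intros)
  from DERIV_chain2[OF deriv this]
  have "((\<lambda>y. \<rho> (y - of_int (round x))) has_real_derivative \<rho>' (x - of_int (round x))) (at x)"
    by simp
  then show ?thesis
  proof (rule has_field_derivative_transform_within_open[of _ _ _ "ball x (1/2 - \<epsilon>)"])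
    fix y assume "y \<in> ball x (1/2 - \<epsilon>)"
    then have "\<bar>y - x\<bar> < 1/2 - \<epsilon>" by (simp add: dist_real_def abs_minus_commute)
    then show "\<rho> (y - of_int (round x)) = \<rho> (y - of_int (round y))"
      using periodization_local_eq[where \<epsilon> = \<epsilon> and \<rho> = \<rho>, OF vanish] by simp
  qed (use \<open>\<epsilon> < 1/2\<close> in auto)
qed

lemma ham_vf_comp_fst:
  assumes "(h has_real_derivative D) (at (fst v))"
  shows "ham_vf (\<lambda>w. h (fst w)) v = (0, D)"
proof -
  have "((\<lambda>w. h (fst w)) has_derivative (\<lambda>u. fst u * D)) (at v)"
    using DERIV_compose_FDERIV[OF assms has_derivative_fst[OF has_derivative_ident]] .
  then show ?thesis unfolding ham_vf_def by (simp add: frechet_derivative_at[symmetric])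
qed

lemma ham_vf_comp_snd:
  assumes "(h has_real_derivative D) (at (snd v))"
  shows "ham_vf (\<lambda>w. h (snd w)) v = (- D, 0)"
proof -
  have "((\<lambda>w. h (snd w)) has_derivative (\<lambda>u. snd u * D)) (at v)"
    using DERIV_compose_FDERIV[OF assms has_derivative_snd[OF has_derivative_ident]] .
  then show ?thesis unfolding ham_vf_def by (simp add: frechet_derivative_at[symmetric])
qed

lemma Hx_eq_periodization:
  assumes "\<And>z. \<epsilon> \<le> \<bar>z\<bar> \<Longrightarrow> \<rho> z = 0"
  shows "Hx \<epsilon> \<rho> = (\<lambda>v. - \<rho> (fst v - of_int (round (fst v))))"
  using assms by (force simp: Hx_def Let_def)

lemma Hy_eq_periodization:
  assumes "\<And>z. \<epsilon> \<le> \<bar>z\<bar> \<Longrightarrow> \<rho> z = 0"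
  shows "Hy \<epsilon> \<rho> = (\<lambda>v. - \<rho> (snd v - of_int (round (snd v))))"
  using assms by (force simp: Hy_def Let_def)

lemma rho_ok_periodization_has_derivative:
  assumes "rho_ok \<epsilon> q r \<rho>" "(\<bar>q\<bar> + r) / 2 \<le> \<epsilon>" "\<epsilon> < 1/2"
  shows "((\<lambda>y. - \<rho> (y - of_int (round y))) has_real_derivative
           - deriv \<rho> (x - of_int (round x))) (at x)"
proof (rule DERIV_minus)
  show "((\<lambda>y. \<rho> (y - of_int (round y))) has_real_derivative deriv \<rho> (x - of_int (round x))) (at x)"
    by (rule periodization_has_derivative[where \<epsilon> = \<epsilon>])
      (use rho_ok_has_derivative[OF assms(1)] rho_ok_vanishes[OF assms(1,2)] assms(3) in auto)
qed

lemma flow_Hx: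
  assumes "rho_ok \<epsilon> q r \<rho>" "(\<bar>q\<bar> + r) / 2 \<le> \<epsilon>" "\<epsilon> < 1/2"
    and flow: "is_flow (ham_vf (Hx \<epsilon> \<rho>)) \<psi>"
  shows "\<psi> t v = v + t *\<^sub>R (0, - deriv \<rho> (fst v - of_int (round (fst v))))"
proof -
  have "Hx \<epsilon> \<rho> = (\<lambda>v. - \<rho> (fst v - of_int (round (fst v))))"
    by (rule Hx_eq_periodization) (rule rho_ok_vanishes[OF assms(1,2)])
  then have "ham_vf (Hx \<epsilon> \<rho>) w = (0, - deriv \<rho> (fst w - of_int (round (fst w))))" for w
    using ham_vf_comp_fst[OF rho_ok_periodization_has_derivative[OF assms(1-3)]] by simp
  from trajectory_of_fibrewise_constant_field[OF bounded_linear_fst this _ is_flow_deriv[OF flow]]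
  show ?thesis by (simp add: is_flow_start[OF flow])
qed

lemma flow_Hy:
  assumes "rho_ok \<epsilon> q r \<rho>" "(\<bar>q\<bar> + r) / 2 \<le> \<epsilon>" "\<epsilon> < 1/2"
    and flow: "is_flow (ham_vf (Hy \<epsilon> \<rho>)) \<psi>"
  shows "\<psi> t v = v + t *\<^sub>R (deriv \<rho> (snd v - of_int (round (snd v))), 0)"
proof -
  have "Hy \<epsilon> \<rho> = (\<lambda>v. - \<rho> (snd v - of_int (round (snd v))))"
    by (rule Hy_eq_periodization) (rule rho_ok_vanishes[OF assms(1,2)])
  then have "ham_vf (Hy \<epsilon> \<rho>) w = (deriv \<rho> (snd w - of_int (round (snd w))), 0)" for w
    using ham_vf_comp_snd[OF rho_ok_periodization_has_derivative[OF assms(1-3)]] by simp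
  from trajectory_of_fibrewise_constant_field[OF bounded_linear_snd this _ is_flow_deriv[OF flow]]
  show ?thesis by (simp add: is_flow_start[OF flow])
qed

section \<open>Commuting maps with disjoint or invariant supports\<close>

lemma inj_fixing_complement_maps_into:
  assumes "inj f" "\<And>v. v \<notin> S \<Longrightarrow> f v = v" "v \<in> S"
  shows "f v \<in> S"
proof (rule ccontr)
  assume "f v \<notin> S"
  then have "f (f v) = f v" by (rule assms(2))
  then have "f v = v" using injD[OF assms(1)] by blast
  with \<open>f v \<notin> S\<close> \<open>v \<in> S\<close> show False by simp
qed

lemma inv_fixing_complement:
  assumes "bij f" "\<And>v. v \<notin> S \<Longrightarrow> f v = v" "v \<notin> S"
  shows "inv f v = v"
  using inv_f_f[OF bij_is_inj[OF assms(1)], of v] assms(2)[OF assms(3)] by simp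

lemma conjugate_fixing_complement:
  assumes "bij T" "\<And>v. v \<notin> S \<Longrightarrow> f v = v" "v \<notin> T ` S"
  shows "(T \<circ> f \<circ> inv T) v = v"
proof -
  have "inv T v \<notin> S"
    using assms(1,3) by (metis bij_inv_eq_iff image_eqI)
  then show ?thesis using assms(1,2) by (simp add: bij_is_surj surj_f_inv_f)
qed

lemma commute_of_disjoint_supports:
  assumes "inj f" "\<And>v. v \<notin> A \<Longrightarrow> f v = v"
    and "inj g" "\<And>v. v \<notin> B \<Longrightarrow> g v = v"
    and "A \<inter> B = {}"
  shows "f (g v) = g (f v)"
proof -
  consider "v \<in> A" | "v \<in> B" | "v \<notin> A" "v \<notin> B" by blast
  then show ?thesis
  proof cases
    case 1
    then have "v \<notin> B" "f v \<notin> B"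
      using assms(5) inj_fixing_complement_maps_into[OF assms(1,2)] by blast+
    then show ?thesis using assms(4) by simp
  next
    case 2
    then have "v \<notin> A" "g v \<notin> A"
      using assms(5) inj_fixing_complement_maps_into[OF assms(3,4)] by blast+
    then show ?thesis using assms(2) by simp
  next
    case 3
    then show ?thesis using assms(2,4) by simp
  qed
qed

lemma conjugate_eq_if_fixes_support:
  assumes T: "bij T" and f: "inj f" "\<And>v. v \<notin> S \<Longrightarrow> f v = v" and fix_S: "\<forall>v\<in>S. T v = v"
  shows "T \<circ> f \<circ> inv T = f"
proof
  fix v
  show "(T \<circ> f \<circ> inv T) v = f v"
  proof (cases "v \<in> S")
    case True
    have "inv T v = v"
      using inv_f_f[OF bij_is_inj[OF T], of v] fix_S True by simp
    moreover have "f v \<in> S"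
      using inj_fixing_complement_maps_into[OF f True] .
    ultimately show ?thesis using fix_S by simp
  next
    case False
    moreover have "T ` S = S" using image_cong[OF refl, of S T "\<lambda>v. v"] fix_S by simp
    ultimately show ?thesis
      using conjugate_fixing_complement[OF T f(2), where v = v] f(2)[OF False] by simp
  qed
qed

(* T \<circ> inv s \<circ> inv T is supported in T ` S: it is inv s if T fixes S, and otherwise its
   support is disjoint from that of s. *)
lemma commutes_with_conjugate_of_inverse:
  assumes T: "bij T" and s: "bij s" and supp: "\<And>v. v \<notin> S \<Longrightarrow> s v = v"
    and T_S: "(\<forall>v\<in>S. T v = v) \<or> T ` S \<inter> S = {}"
  shows "s ((T \<circ> inv s \<circ> inv T) w) = (T \<circ> inv s \<circ> inv T) (s w)"
proof -
  have inv_supp: "inv s v = v" if "v \<notin> S" for v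
    using inv_fixing_complement[OF s supp that] .
  have bij_inv_s: "bij (inv s)" using s by (rule bij_imp_bij_inv)
  from T_S show ?thesis
  proof
    assume "\<forall>v\<in>S. T v = v"
    then have "T \<circ> inv s \<circ> inv T = inv s"
      using conjugate_eq_if_fixes_support[OF T bij_is_inj[OF bij_inv_s]] inv_supp by blast
    then show ?thesis using s by (simp add: bij_is_inj bij_is_surj surj_f_inv_f)
  next
    assume disjoint: "T ` S \<inter> S = {}"
    show ?thesis
    proof (rule commute_of_disjoint_supports[OF bij_is_inj[OF s] supp _
          conjugate_fixing_complement[OF T inv_supp]])
      show "inj (T \<circ> inv s \<circ> inv T)"
        using T bij_inv_s by (intro bij_is_inj bij_comp bij_imp_bij_inv) (simp_all add: s)
      show "S \<inter> T ` S = {}" using disjoint by blast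
    qed
  qed
qed

lemma commute_on_invariant_support:
  assumes "inj T" "T ` S = S" "\<And>v. v \<notin> S \<Longrightarrow> f v = v" "\<And>v. v \<in> S \<Longrightarrow> f v \<in> S"
    and "\<And>v. v \<in> S \<Longrightarrow> f (T v) = T (f v)"
  shows "f (T v) = T (f v)"
proof (cases "v \<in> S")
  case False
  then have "T v \<notin> S" using assms(1,2) by (metis imageE inj_eq)
  then show ?thesis using False assms(3) by simp
qed (rule assms(5))

lemma bij_restr_shear:
  fixes G :: "'b \<Rightarrow> real \<times> real"
  assumes fibre: "\<And>v y. \<pi> (v + G y) = \<pi> v"
    and saturated: "\<And>v w. \<pi> v = \<pi> w \<Longrightarrow> v \<in> S \<longleftrightarrow> w \<in> S"
  shows "bij (restr_map S (\<lambda>v. v + G (\<pi> v)))"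
proof (rule bij_betw_byWitness[of UNIV "restr_map S (\<lambda>v. v - G (\<pi> v))"])
  have fibre_diff: "\<pi> (v - G y) = \<pi> v" for v y
    using fibre[of "v - G y" y] by simp
  show "\<forall>v\<in>UNIV. restr_map S (\<lambda>v. v - G (\<pi> v)) (restr_map S (\<lambda>v. v + G (\<pi> v)) v) = v"
    using saturated[OF fibre] by (simp add: restr_map_def fibre)
  show "\<forall>v\<in>UNIV. restr_map S (\<lambda>v. v + G (\<pi> v)) (restr_map S (\<lambda>v. v - G (\<pi> v)) v) = v"
    using saturated[OF fibre_diff] by (simp add: restr_map_def fibre_diff)
qed auto

lemma restr_shear_commutes_with_translation:
  fixes G :: "'b \<Rightarrow> real \<times> real"
  assumes fibre: "\<And>v y. \<pi> (v + G y) = \<pi> v"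
    and saturated: "\<And>v w. \<pi> v = \<pi> w \<Longrightarrow> v \<in> S \<longleftrightarrow> w \<in> S"
    and along_fibre: "\<And>v. \<pi> (v + e) = \<pi> v"
    and "inj T" and T: "\<And>v. v \<in> S \<Longrightarrow> T v = v + e"
  defines "\<sigma> \<equiv> restr_map S (\<lambda>v. v + G (\<pi> v))"
  shows "\<sigma> (T v) = T (\<sigma> v)"
proof (rule commute_on_invariant_support[OF \<open>inj T\<close>])
  have T_in: "T v \<in> S" if "v \<in> S" for v
    using that saturated[OF along_fibre] T by simp
  have \<sigma>_in: "\<sigma> v \<in> S" if "v \<in> S" for v
    using that saturated[OF fibre] by (simp add: \<sigma>_def restr_map_def)
  have "\<pi> (w - e) = \<pi> w" for w
    using along_fibre[of "w - e"] by simp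
  then have "w \<in> T ` S" if "w \<in> S" for w
    using that saturated T[of "w - e"] by (metis diff_add_cancel image_eqI)
  then show "T ` S = S" using T_in by blast
  show "\<sigma> v = v" if "v \<notin> S" for v
    using that by (simp add: \<sigma>_def restr_map_def)
  show "\<sigma> v \<in> S" if "v \<in> S" for v
    using that by (rule \<sigma>_in)
  show "\<sigma> (T v) = T (\<sigma> v)" if "v \<in> S" for v
  proof -
    have "\<sigma> (T v) = v + e + G (\<pi> v)"
      using that T_in[OF that] by (simp add: \<sigma>_def restr_map_def T along_fibre)
    moreover have "T (\<sigma> v) = v + G (\<pi> v) + e"
      using that T[OF \<sigma>_in[OF that]] by (simp add: \<sigma>_def restr_map_def)
    ultimately show ?thesis by (simp add: add_ac)
  qed
qed

section \<open>Strips and the translations \<tau>, \<tau>'\<close>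

lemma Iqr_segment:
  assumes "x \<in> Iqr (-q) r" "(\<bar>q\<bar> + r) / 2 \<le> \<epsilon>" "t \<in> {0..1}"
  shows "\<bar>x + t * q\<bar> < \<epsilon>"
proof -
  have centre: "\<bar>x + q / 2\<bar> < r / 2"
    using assms(1) by (auto simp: Iqr_def abs_less_iff field_simps)
  have "\<bar>t - 1/2\<bar> \<le> 1/2"
    using assms(3) unfolding abs_le_iff atLeastAtMost_iff by linarith
  then have offset: "\<bar>q * (t - 1/2)\<bar> \<le> \<bar>q\<bar> / 2"
    using mult_left_mono[of "\<bar>t - 1/2\<bar>" "1/2" "\<bar>q\<bar>"] by (simp add: abs_mult)
  have split: "x + t * q = (x + q / 2) + q * (t - 1/2)"
    by (simp add: algebra_simps)
  have "\<bar>(x + q / 2) + q * (t - 1/2)\<bar> \<le> \<bar>x + q / 2\<bar> + \<bar>q * (t - 1/2)\<bar>"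
    by (rule abs_triangle_ineq)
  also have "\<dots> < (\<bar>q\<bar> + r) / 2"
    using centre offset by simp
  finally show ?thesis unfolding split using assms(2) by simp
qed

lemma Iqr_shift_disjoint:
  assumes "x - of_int m \<in> Iqr (-q) r" "r \<le> \<bar>q\<bar>" "\<bar>q\<bar> + r \<le> 1"
  shows "x + q - of_int n \<notin> Iqr (-q) r"
proof
  assume "x + q - of_int n \<in> Iqr (-q) r"
  then have close: "\<bar>q + of_int m - of_int n\<bar> < r"
    using assms(1) by (auto simp: Iqr_def abs_less_iff)
  then have "of_int (m - n) < (1::real)" "(-1::real) < of_int (m - n)"
    using assms(2,3) by (auto simp: abs_less_iff)
  then have "m = n" by linarith
  then show False using close assms(2) by simp
qed

lemma Delta_le_abs: "c \<noteq> 0 \<Longrightarrow> Delta c d \<le> \<bar>c\<bar>"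
  by (auto simp: Delta_def)

lemma qr_bound:
  assumes "\<bar>c\<bar> \<le> \<epsilon>"
  shows "(\<bar>fst (qr \<epsilon> c d)\<bar> + snd (qr \<epsilon> c d)) / 2 \<le> \<epsilon>"
  using assms Delta_le_abs[of c d] by (auto simp: qr_def)

lemma in_cross_fst: "\<bar>fst w - of_int m\<bar> \<le> \<epsilon> \<Longrightarrow> w \<in> cross \<epsilon>"
  unfolding cross_def by blast

lemma in_cross_snd: "\<bar>snd w - of_int m\<bar> \<le> \<epsilon> \<Longrightarrow> w \<in> cross \<epsilon>"
  unfolding cross_def by blast

lemma flow_translation_near_vertical_line:
  assumes flow: "is_flow Y \<phi>" and Y: "\<forall>w\<in>cross \<epsilon>. Y w = C"
    and segment: "\<And>t. t \<in> {0..1} \<Longrightarrow> \<bar>fst p + t * fst C - of_int m\<bar> < \<epsilon>"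
  shows "\<phi> 1 p = p + C"
proof -
  have "\<phi> 1 p = \<phi> 0 p + C"
  proof (rule trajectory_in_constant_region[OF is_flow_deriv[OF flow]])
    show "open {w. \<bar>fst w - of_int m\<bar> < \<epsilon>}"
      by (intro open_Collect_less continuous_intros)
    show "Y w = C" if "w \<in> {w. \<bar>fst w - of_int m\<bar> < \<epsilon>}" for w
      using that Y in_cross_fst[of w m \<epsilon>] by simp
    show "\<phi> 0 p + t *\<^sub>R C \<in> {w. \<bar>fst w - of_int m\<bar> < \<epsilon>}" if "t \<in> {0..1}" for t
      using segment[OF that] by (simp add: is_flow_start[OF flow])
  qed
  then show ?thesis by (simp add: is_flow_start[OF flow])
qed

lemma flow_translation_near_horizontal_line:
  assumes flow: "is_flow Y \<phi>" and Y: "\<forall>w\<in>cross \<epsilon>. Y w = C"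
    and segment: "\<And>t. t \<in> {0..1} \<Longrightarrow> \<bar>snd p + t * snd C - of_int m\<bar> < \<epsilon>"
  shows "\<phi> 1 p = p + C"
proof -
  have "\<phi> 1 p = \<phi> 0 p + C"
  proof (rule trajectory_in_constant_region[OF is_flow_deriv[OF flow]])
    show "open {w. \<bar>snd w - of_int m\<bar> < \<epsilon>}"
      by (intro open_Collect_less continuous_intros)
    show "Y w = C" if "w \<in> {w. \<bar>snd w - of_int m\<bar> < \<epsilon>}" for w
      using that Y in_cross_snd[of w m \<epsilon>] by simp
    show "\<phi> 0 p + t *\<^sub>R C \<in> {w. \<bar>snd w - of_int m\<bar> < \<epsilon>}" if "t \<in> {0..1}" for t
      using segment[OF that] by (simp add: is_flow_start[OF flow])
  qed
  then show ?thesis by (simp add: is_flow_start[OF flow])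
qed

lemma commutes_TI: "(\<And>v. f (g v) = g (f v)) \<Longrightarrow> commutes_T f g"
  by (simp add: commutes_T_def torus_eq_def in_Z2_def)

locale translations_and_shears =
  fixes \<epsilon> a b c d :: real
    and Y Y' :: "real \<times> real \<Rightarrow> real \<times> real"
    and \<phi> \<phi>' \<psi> \<psi>' :: "real \<Rightarrow> real \<times> real \<Rightarrow> real \<times> real"
    and \<rho> \<rho>' :: "real \<Rightarrow> real"
  assumes small: "\<epsilon> < 1/4" "\<bar>c\<bar> \<le> \<epsilon>" "\<bar>d\<bar> \<le> \<epsilon>"
    and Y: "Ck 1 Y" "periodic2 Y" "\<forall>v\<in>cross \<epsilon>. Y v = (c, 0)" "is_flow Y \<phi>"
    and Y': "Ck 1 Y'" "periodic2 Y'" "\<forall>v\<in>cross \<epsilon>. Y' v = (0, - d)" "is_flow Y' \<phi>'"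
    and \<rho>: "rho_ok \<epsilon> (fst (qr \<epsilon> c d)) (snd (qr \<epsilon> c d)) \<rho>" "is_flow (ham_vf (Hx \<epsilon> \<rho>)) \<psi>"
    and \<rho>': "rho_ok \<epsilon> (fst (qr \<epsilon> d c)) (snd (qr \<epsilon> d c)) \<rho>'" "is_flow (ham_vf (Hy \<epsilon> \<rho>')) \<psi>'"
begin

abbreviation "q \<equiv> fst (qr \<epsilon> c d)"
abbreviation "r \<equiv> snd (qr \<epsilon> c d)"
abbreviation "q' \<equiv> fst (qr \<epsilon> d c)"
abbreviation "r' \<equiv> snd (qr \<epsilon> d c)"
abbreviation "S \<equiv> xstrip q r"
abbreviation "S' \<equiv> ystrip q' r'"
abbreviation "\<tau> \<equiv> \<phi> 1"
abbreviation "\<tau>' \<equiv> \<phi>' 1"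
abbreviation "\<sigma> \<equiv> restr_map S (\<psi> b)"
abbreviation "\<sigma>' \<equiv> restr_map S' (\<psi>' a)"

lemma bij_\<tau>: "bij \<tau>"
proof -
  obtain L where "L-lipschitz_on UNIV Y" by (rule C1_periodic2_lipschitz[OF Y(1,2)])
  then show ?thesis by (rule bij_flow[OF _ Y(4)])
qed

lemma bij_\<tau>': "bij \<tau>'"
proof -
  obtain L where "L-lipschitz_on UNIV Y'" by (rule C1_periodic2_lipschitz[OF Y'(1,2)])
  then show ?thesis by (rule bij_flow[OF _ Y'(4)])
qed

lemma q_bound: "(\<bar>q\<bar> + r) / 2 \<le> \<epsilon>" and q'_bound: "(\<bar>q'\<bar> + r') / 2 \<le> \<epsilon>"
  using qr_bound small by blast+

lemma \<psi>_eq: "\<psi> t v = v + t *\<^sub>R (0, - deriv \<rho> (fst v - of_int (round (fst v))))"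
  using flow_Hx[OF \<rho>(1) q_bound _ \<rho>(2)] small by simp

lemma \<psi>'_eq: "\<psi>' t v = v + t *\<^sub>R (deriv \<rho>' (snd v - of_int (round (snd v))), 0)"
  using flow_Hy[OF \<rho>'(1) q'_bound _ \<rho>'(2)] small by simp

lemma S_saturated: "fst v = fst w \<Longrightarrow> v \<in> S \<longleftrightarrow> w \<in> S"
  by (simp add: xstrip_def)

lemma S'_saturated: "snd v = snd w \<Longrightarrow> v \<in> S' \<longleftrightarrow> w \<in> S'"
  by (simp add: ystrip_def)

lemma bij_\<sigma>: "bij \<sigma>"
  unfolding \<psi>_eq
  by (rule bij_restr_shear[where \<pi> = fst and G = "\<lambda>y. b *\<^sub>R (0, - deriv \<rho> (y - of_int (round y)))",
        OF _ S_saturated]) simp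

lemma bij_\<sigma>': "bij \<sigma>'"
  unfolding \<psi>'_eq
  by (rule bij_restr_shear[where \<pi> = snd and G = "\<lambda>y. a *\<^sub>R (deriv \<rho>' (y - of_int (round y)), 0)",
        OF _ S'_saturated]) simp

lemma \<tau>_on_S: "v \<in> S \<Longrightarrow> \<tau> v = v + (c, 0)"
proof -
  assume "v \<in> S"
  then obtain m :: int where m: "fst v - of_int m \<in> Iqr (-q) r" by (auto simp: xstrip_def)
  show ?thesis
  proof (rule flow_translation_near_vertical_line[OF Y(4,3)])
    fix t :: real assume "t \<in> {0..1}"
    then have "\<bar>fst v - of_int m + t * q\<bar> < \<epsilon>" "\<bar>fst v - of_int m + 0 * q\<bar> < \<epsilon>"
      using Iqr_segment[OF m q_bound, of t] Iqr_segment[OF m q_bound, of 0] by auto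
    then show "\<bar>fst v + t * fst (c, 0::real) - of_int m\<bar> < \<epsilon>"
      by (cases "c = 0") (auto simp: qr_def algebra_simps)
  qed
qed

lemma \<tau>'_on_S: "v \<in> S \<Longrightarrow> \<tau>' v = v + (0, - d)"
proof -
  assume "v \<in> S"
  then obtain m :: int where m: "fst v - of_int m \<in> Iqr (-q) r" by (auto simp: xstrip_def)
  show ?thesis
    by (rule flow_translation_near_vertical_line[OF Y'(4,3)])
      (use Iqr_segment[OF m q_bound, of 0] in simp)
qed

lemma \<tau>_on_S': "v \<in> S' \<Longrightarrow> \<tau> v = v + (c, 0)"
proof -
  assume "v \<in> S'"
  then obtain m :: int where m: "snd v - of_int m \<in> Iqr (-q') r'" by (auto simp: ystrip_def)
  show ?thesis
    by (rule flow_translation_near_horizontal_line[OF Y(4,3)])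
      (use Iqr_segment[OF m q'_bound, of 0] in simp)
qed

lemma inv_\<tau>'_on_S': "v \<in> S' \<Longrightarrow> inv \<tau>' v = v + (0, d)"
proof -
  assume "v \<in> S'"
  then obtain m :: int where m: "snd v - of_int m \<in> Iqr (-q') r'" by (auto simp: ystrip_def)
  \<comment> \<open>the segment from v + (0, d) down to v stays in the band around the line y = m\<close>
  have "\<tau>' (v + (0, d)) = v + (0, d) + (0, - d)"
  proof (rule flow_translation_near_horizontal_line[OF Y'(4,3)])
    fix t :: real assume "t \<in> {0..1}"
    then have "\<bar>snd v - of_int m + (1 - t) * q'\<bar> < \<epsilon>" "\<bar>snd v - of_int m + 0 * q'\<bar> < \<epsilon>"
      using Iqr_segment[OF m q'_bound, of "1 - t"] Iqr_segment[OF m q'_bound, of 0] by auto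
    then show "\<bar>snd (v + (0, d)) + t * snd (0::real, - d) - of_int m\<bar> < \<epsilon>"
      by (cases "d = 0") (auto simp: qr_def algebra_simps)
  qed
  then have "\<tau>' (v + (0, d)) = v" by (simp add: zero_prod_def)
  then show ?thesis by (rule inv_f_eq[OF bij_is_inj[OF bij_\<tau>']])
qed

lemma \<tau>_fixes_or_displaces_S: "(\<forall>v\<in>S. \<tau> v = v) \<or> \<tau> ` S \<inter> S = {}"
proof (cases "c = 0")
  case False
  then have qr: "q = c" "r \<le> \<bar>c\<bar>" "\<bar>c\<bar> + r \<le> 1"
    using Delta_le_abs[OF False, of d] small by (auto simp: qr_def)
  have "\<tau> v \<notin> S" if v: "v \<in> S" for v
  proof -
    obtain m :: int where "fst v - of_int m \<in> Iqr (-q) r"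
      using v by (auto simp: xstrip_def)
    then show ?thesis
      using Iqr_shift_disjoint[OF _ qr(2,3)] \<tau>_on_S[OF v] qr by (auto simp: xstrip_def)
  qed
  then show ?thesis by blast
qed (simp add: \<tau>_on_S zero_prod_def)

lemma inv_\<tau>'_fixes_or_displaces_S': "(\<forall>v\<in>S'. inv \<tau>' v = v) \<or> inv \<tau>' ` S' \<inter> S' = {}"
proof (cases "d = 0")
  case False
  then have qr: "q' = d" "r' \<le> \<bar>d\<bar>" "\<bar>d\<bar> + r' \<le> 1"
    using Delta_le_abs[OF False, of c] small by (auto simp: qr_def)
  have "inv \<tau>' v \<notin> S'" if v: "v \<in> S'" for v
  proof -
    obtain m :: int where "snd v - of_int m \<in> Iqr (-q') r'"
      using v by (auto simp: ystrip_def)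
    then show ?thesis
      using Iqr_shift_disjoint[OF _ qr(2,3)] inv_\<tau>'_on_S'[OF v] qr by (auto simp: ystrip_def)
  qed
  then show ?thesis by blast
qed (simp add: inv_\<tau>'_on_S' zero_prod_def)

lemma \<sigma>_commutes_with_commutator: "\<sigma> ((\<tau> \<circ> inv \<sigma> \<circ> inv \<tau>) w) = (\<tau> \<circ> inv \<sigma> \<circ> inv \<tau>) (\<sigma> w)"
  by (rule commutes_with_conjugate_of_inverse[OF bij_\<tau> bij_\<sigma> _ \<tau>_fixes_or_displaces_S])
    (simp add: restr_map_def)

lemma \<sigma>'_commutes_with_commutator:
  "\<sigma>' ((inv \<tau>' \<circ> inv \<sigma>' \<circ> \<tau>') w) = (inv \<tau>' \<circ> inv \<sigma>' \<circ> \<tau>') (\<sigma>' w)"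
  using commutes_with_conjugate_of_inverse[OF bij_imp_bij_inv[OF bij_\<tau>'] bij_\<sigma>' _
      inv_\<tau>'_fixes_or_displaces_S']
  by (simp add: restr_map_def inv_inv_eq[OF bij_\<tau>'])

lemma \<sigma>_commutes_with_\<tau>': "\<sigma> (\<tau>' v) = \<tau>' (\<sigma> v)"
  unfolding \<psi>_eq
  by (rule restr_shear_commutes_with_translation[where \<pi> = fst and e = "(0, - d)"
        and G = "\<lambda>y. b *\<^sub>R (0, - deriv \<rho> (y - of_int (round y)))",
        OF _ S_saturated _ bij_is_inj[OF bij_\<tau>'] \<tau>'_on_S]) simp_all

lemma \<sigma>'_commutes_with_\<tau>: "\<sigma>' (\<tau> v) = \<tau> (\<sigma>' v)"
  unfolding \<psi>'_eq
  by (rule restr_shear_commutes_with_translation[where \<pi> = snd and e = "(c, 0)"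
        and G = "\<lambda>y. a *\<^sub>R (deriv \<rho>' (y - of_int (round y)), 0)",
        OF _ S'_saturated _ bij_is_inj[OF bij_\<tau>] \<tau>_on_S']) simp_all

end

theorem lemma3p2:
  fixes \<epsilon> a b c d :: real
    and Y Y' :: "real \<times> real \<Rightarrow> real \<times> real"
    and \<phi> \<phi>' \<psi> \<psi>' :: "real \<Rightarrow> real \<times> real \<Rightarrow> real \<times> real"
    and \<rho> \<rho>' :: "real \<Rightarrow> real"
  assumes "0 < \<epsilon>" and "\<epsilon> < 1/4" and "\<bar>c\<bar> \<le> \<epsilon>" and "\<bar>d\<bar> \<le> \<epsilon>"
    and "sympl_field \<epsilon> Y" and "\<forall>v\<in>cross \<epsilon>. Y v = (c, 0)"
    and "sympl_field \<epsilon> Y'" and "\<forall>v\<in>cross \<epsilon>. Y' v = (0, - d)"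
    and "is_flow Y \<phi>" and "is_flow Y' \<phi>'"
    and "rho_ok \<epsilon> (fst (qr \<epsilon> c d)) (snd (qr \<epsilon> c d)) \<rho>"
    and "rho_ok \<epsilon> (fst (qr \<epsilon> d c)) (snd (qr \<epsilon> d c)) \<rho>'"
    and "is_flow (ham_vf (Hx \<epsilon> \<rho>)) \<psi>"
    and "is_flow (ham_vf (Hy \<epsilon> \<rho>')) \<psi>'"
  shows "let \<tau> = \<phi> 1; \<tau>' = \<phi>' 1;
             \<sigma> = restr_map (xstrip (fst (qr \<epsilon> c d)) (snd (qr \<epsilon> c d))) (\<psi> b);
             \<sigma>' = restr_map (ystrip (fst (qr \<epsilon> d c)) (snd (qr \<epsilon> d c))) (\<psi>' a)
         in commutes_T \<sigma> (\<tau> \<circ> inv \<sigma> \<circ> inv \<tau>)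
          \<and> commutes_T \<sigma>' (inv \<tau>' \<circ> inv \<sigma>' \<circ> \<tau>')
          \<and> commutes_T \<sigma> \<tau>' \<and> commutes_T \<sigma>' \<tau>"
proof -
  interpret translations_and_shears \<epsilon> a b c d Y Y' \<phi> \<phi>' \<psi> \<psi>' \<rho> \<rho>'
    using assms by unfold_locales (auto simp: sympl_field_def smooth_def)
  show ?thesis
    unfolding Let_def
    by (intro conjI commutes_TI \<sigma>_commutes_with_commutator \<sigma>'_commutes_with_commutator
        \<sigma>_commutes_with_\<tau>' \<sigma>'_commutes_with_\<tau>)
qed

end
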